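(* Let $m\ge 2$ be an integer and let $H$ be a finite, simple, connected graph of order at least $2$. The Cartesian product $K_m \,\square\, H$ is well-dominated if and only if either $m \neq 3$ and $H$ is isomorphic to $K_m$, or $m=3$ and $H$ is isomorphic to $K_3$ or to the path $P_3$ on three vertices.
   Context: A set $D$ of vertices of a graph is dominating if every vertex is in $D$ or adjacent to a vertex of $D$. A graph is well-dominated if every minimal (with respect to inclusion) dominating set is a minimum dominating set. The Cartesian product $G\,\square\, H$ has vertex set $V(G)\times V(H)$, with $(g_1,h_1)$ adjacent to $(g_2,h_2)$ iff either ($g_1=g_2$ and $h_1h_2\in E(H)$) or ($h_1=h_2$ and $g_1g_2\in E(G)$). *)

theory Defs
  imports Main
begin

type_synonym 'a graph = "'a set \<times> ('a \<Rightarrow> 'a \<Rightarrow> bool)"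

definition verts :: "'a graph \<Rightarrow> 'a set" where "verts G = fst G"
definition adj :: "'a graph \<Rightarrow> 'a \<Rightarrow> 'a \<Rightarrow> bool" where "adj G = snd G"

definition fin_simple_graph :: "'a graph \<Rightarrow> bool" where
  "fin_simple_graph G \<longleftrightarrow> finite (verts G) \<and>
     (\<forall>x y. adj G x y \<longrightarrow> x \<in> verts G \<and> y \<in> verts G \<and> x \<noteq> y \<and> adj G y x)"

definition connected_graph :: "'a graph \<Rightarrow> bool" where
  "connected_graph G \<longleftrightarrow> verts G \<noteq> {} \<and>
     (\<forall>x\<in>verts G. \<forall>y\<in>verts G. (adj G)\<^sup>*\<^sup>* x y)"

definition graph_iso :: "'a graph \<Rightarrow> 'b graph \<Rightarrow> bool" where
  "graph_iso G H \<longleftrightarrow> (\<exists>f. bij_betw f (verts G) (verts H) \<and>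
     (\<forall>x\<in>verts G. \<forall>y\<in>verts G. adj G x y \<longleftrightarrow> adj H (f x) (f y)))"

definition complete_graph :: "nat \<Rightarrow> nat graph" where
  "complete_graph m = ({0..<m}, \<lambda>x y. x < m \<and> y < m \<and> x \<noteq> y)"

definition path_graph :: "nat \<Rightarrow> nat graph" where
  "path_graph n = ({0..<n}, \<lambda>x y. x < n \<and> y < n \<and> (x = y + 1 \<or> y = x + 1))"

definition cart_prod :: "'a graph \<Rightarrow> 'b graph \<Rightarrow> ('a \<times> 'b) graph" where
  "cart_prod G H = (verts G \<times> verts H,
     \<lambda>(g1, h1) (g2, h2). (g1 = g2 \<and> g1 \<in> verts G \<and> adj H h1 h2) \<or>
                         (h1 = h2 \<and> h1 \<in> verts H \<and> adj G g1 g2))"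

definition dominating :: "'a graph \<Rightarrow> 'a set \<Rightarrow> bool" where
  "dominating G D \<longleftrightarrow> D \<subseteq> verts G \<and>
     (\<forall>v\<in>verts G. v \<in> D \<or> (\<exists>u\<in>D. adj G v u))"

definition minimal_dominating :: "'a graph \<Rightarrow> 'a set \<Rightarrow> bool" where
  "minimal_dominating G D \<longleftrightarrow> dominating G D \<and> (\<forall>D'. D' \<subset> D \<longrightarrow> \<not> dominating G D')"

definition minimum_dominating :: "'a graph \<Rightarrow> 'a set \<Rightarrow> bool" where
  "minimum_dominating G D \<longleftrightarrow> dominating G D \<and> (\<forall>D'. dominating G D' \<longrightarrow> card D \<le> card D')"

definition well_dominated :: "'a graph \<Rightarrow> bool" where
  "well_dominated G \<longleftrightarrow> (\<forall>D. minimal_dominating G D \<longrightarrow> minimum_dominating G D)"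

end

theory Submission
  imports Defs
begin

text \<open>In \<open>G = K\<^sub>m \<box> H\<close> the layer \<open>{0} \<times> V(H)\<close> is a minimal dominating set, so if \<open>G\<close> is
  well-dominated then every dominating set whose elements all have private neighbours has exactly
  \<open>n = |V(H)|\<close> elements, and any subset of a dominating set whose elements have private neighbours
  has at most \<open>n\<close>.  Applied to the fibre of a vertex \<open>b\<close> plus a layer copy of its non-neighbours,
  this gives \<open>deg b = m - 1\<close> if some neighbour of \<open>b\<close> has all its neighbours in \<open>N[b]\<close> and
  \<open>deg b = m - 2\<close> otherwise; applied to the fibres of both ends of an edge \<open>ab\<close>, it gives
  \<open>|N(a) \<union> N(b)| \<ge> 2m - 2\<close> as soon as each end has a neighbour outside the other's closed
  neighbourhood.  These bounds are incompatible unless \<open>H\<close> is complete (and then \<open>n = m\<close>) or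
  \<open>m = n = 3\<close>, where \<open>H = P\<^sub>3\<close>.  Conversely, every minimal dominating set of \<open>K\<^sub>m \<box> K\<^sub>m\<close>
  or \<open>K\<^sub>3 \<box> P\<^sub>3\<close> meets every fibre or every layer in exactly one vertex.\<close>

section \<open>Domination and private neighbours\<close>

definition nbhd :: "'a graph \<Rightarrow> 'a \<Rightarrow> 'a set" where
  "nbhd G v = {u. adj G v u}"

definition cnbhd :: "'a graph \<Rightarrow> 'a \<Rightarrow> 'a set" where
  "cnbhd G v = insert v (nbhd G v)"

definition private_nbr :: "'a graph \<Rightarrow> 'a set \<Rightarrow> 'a \<Rightarrow> 'a \<Rightarrow> bool" where
  "private_nbr G D v w \<longleftrightarrow> w \<in> verts G \<and> cnbhd G w \<inter> D = {v}"

lemma dominating_iff_cnbhd: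
  "dominating G D \<longleftrightarrow> D \<subseteq> verts G \<and> (\<forall>v\<in>verts G. cnbhd G v \<inter> D \<noteq> {})"
  by (auto simp: dominating_def cnbhd_def nbhd_def)

lemma finite_dominating: "finite (verts G) \<Longrightarrow> dominating G D \<Longrightarrow> finite D"
  by (auto simp: dominating_def intro: finite_subset)

lemma private_nbr_mem_dominating_subset:
  assumes "dominating G D" "D \<subseteq> D0" "private_nbr G D0 v w"
  shows "v \<in> D"
proof -
  have "cnbhd G w \<inter> D \<noteq> {}" "cnbhd G w \<inter> D \<subseteq> {v}"
    using assms by (auto simp: dominating_iff_cnbhd private_nbr_def)
  then show ?thesis by blast
qed

lemma minimal_dominatingI:
  assumes dom: "dominating G D" and priv: "\<And>v. v \<in> D \<Longrightarrow> \<exists>w. private_nbr G D v w"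
  shows "minimal_dominating G D"
  unfolding minimal_dominating_def
proof (intro conjI allI impI notI)
  fix D' assume sub: "D' \<subset> D" and dom': "dominating G D'"
  then obtain v where v: "v \<in> D" "v \<notin> D'" by blast
  obtain w where "private_nbr G D v w" using priv[OF v(1)] by blast
  then have "v \<in> D'" using private_nbr_mem_dominating_subset[OF dom'] sub by blast
  with v(2) show False by contradiction
qed (fact dom)

lemma minimal_dominating_private_nbr:
  assumes min: "minimal_dominating G D" and v: "v \<in> D"
  shows "\<exists>w. private_nbr G D v w"
proof -
  have dom: "dominating G D" using min by (simp add: minimal_dominating_def)
  have "D - {v} \<subset> D" using v by blast
  then have "\<not> dominating G (D - {v})" using min by (simp add: minimal_dominating_def)
  moreover have "D - {v} \<subseteq> verts G" using dom by (auto simp: dominating_def)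
  ultimately obtain w where w: "w \<in> verts G" "cnbhd G w \<inter> (D - {v}) = {}"
    by (auto simp: dominating_iff_cnbhd)
  moreover have "cnbhd G w \<inter> D \<noteq> {}" using dom w(1) by (simp add: dominating_iff_cnbhd)
  ultimately have "cnbhd G w \<inter> D = {v}" by blast
  with w(1) show ?thesis by (auto simp: private_nbr_def)
qed

lemma exists_minimal_dominating_subset:
  assumes fin: "finite (verts G)" and dom: "dominating G D0"
  obtains D where "D \<subseteq> D0" "minimal_dominating G D"
proof -
  obtain D where D: "D \<subseteq> D0" "dominating G D"
    and least: "\<And>D'. D' \<subseteq> D0 \<Longrightarrow> dominating G D' \<Longrightarrow> card D \<le> card D'"
    using ex_has_least_nat[of "\<lambda>D. D \<subseteq> D0 \<and> dominating G D" D0 card] dom by auto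
  have "minimal_dominating G D"
    unfolding minimal_dominating_def
  proof (intro conjI allI impI notI)
    fix D' assume "D' \<subset> D" "dominating G D'"
    moreover have "finite D" using finite_dominating[OF fin D(2)] .
    ultimately have "card D' < card D" by (simp add: psubset_card_mono)
    moreover have "card D \<le> card D'" using least \<open>D' \<subset> D\<close> \<open>dominating G D'\<close> D(1) by blast
    ultimately show False by simp
  qed (fact D(2))
  with D(1) show thesis by (rule that)
qed

lemma well_dominatedI:
  assumes fin: "finite (verts G)" and card: "\<And>D. minimal_dominating G D \<Longrightarrow> card D = k"
  shows "well_dominated G"
  unfolding well_dominated_def minimum_dominating_def
proof (intro allI impI conjI)
  fix D D' assume min: "minimal_dominating G D" and dom': "dominating G D'"
  obtain D'' where "D'' \<subseteq> D'" "minimal_dominating G D''"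
    using exists_minimal_dominating_subset[OF fin dom'] .
  then have "card D'' \<le> card D'" using finite_dominating[OF fin dom'] by (simp add: card_mono)
  then show "card D \<le> card D'" using card[OF min] card[OF \<open>minimal_dominating G D''\<close>] by simp
qed (simp add: minimal_dominating_def)

lemma well_dominated_card_le:
  assumes "well_dominated G" "minimal_dominating G L" "dominating G D"
  shows "card L \<le> card D"
  using assms unfolding well_dominated_def minimum_dominating_def by blast

lemma well_dominated_card_private_nbrs_le:
  assumes wd: "well_dominated G" and fin: "finite (verts G)" and L: "minimal_dominating G L"
    and dom: "dominating G D0" and F: "F \<subseteq> D0" and priv: "\<And>v. v \<in> F \<Longrightarrow> \<exists>w. private_nbr G D0 v w"
  shows "card F \<le> card L"
proof -
  obtain D where D: "D \<subseteq> D0" "minimal_dominating G D"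
    using exists_minimal_dominating_subset[OF fin dom] .
  then have dom_D: "dominating G D" by (simp add: minimal_dominating_def)
  have "F \<subseteq> D" using priv private_nbr_mem_dominating_subset[OF dom_D D(1)] by blast
  then have "card F \<le> card D" using finite_dominating[OF fin dom_D] by (simp add: card_mono)
  also have "card D \<le> card L" using well_dominated_card_le[OF wd D(2)] L
    by (simp add: minimal_dominating_def)
  finally show ?thesis .
qed

text \<open>The private neighbour \<open>w\<close> of \<open>v \<in> D\<close> sees every element of \<open>D\<close> in its block; as \<open>D\<close>
  meets that block, \<open>v\<close> lies in it and is the only element of \<open>D\<close> there.\<close>

lemma card_minimal_dominating_blocks:
  assumes min: "minimal_dominating G D"
    and block: "\<And>u w. u \<in> verts G \<Longrightarrow> w \<in> verts G \<Longrightarrow> f u = f w \<Longrightarrow> u \<in> cnbhd G w"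
    and meets: "\<And>w. w \<in> verts G \<Longrightarrow> \<exists>u\<in>D. f u = f w"
  shows "card D = card (f ` verts G)"
proof -
  have DV: "D \<subseteq> verts G" using min by (simp add: minimal_dominating_def dominating_def)
  have "inj_on f D"
  proof (rule inj_onI)
    fix v v' assume v: "v \<in> D" and v': "v' \<in> D" and eq: "f v = f v'"
    obtain w where w: "w \<in> verts G" "cnbhd G w \<inter> D = {v}"
      using minimal_dominating_private_nbr[OF min v] by (auto simp: private_nbr_def)
    obtain u where u: "u \<in> D" "f u = f w" using meets[OF w(1)] by blast
    then have "u = v" using block[of u w] DV w by blast
    then have "v' \<in> cnbhd G w" using block[of v' w] DV v' eq u(2) w(1) by auto
    then show "v = v'" using v' w(2) by (metis IntI singletonD)
  qed
  moreover have "f ` D = f ` verts G"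
  proof
    show "f ` D \<subseteq> f ` verts G" using DV by (rule image_mono)
    show "f ` verts G \<subseteq> f ` D"
    proof
      fix x assume "x \<in> f ` verts G"
      then obtain w where "w \<in> verts G" "x = f w" by blast
      with meets show "x \<in> f ` D" by (metis imageI)
    qed
  qed
  ultimately show ?thesis by (metis card_image)
qed

section \<open>Isomorphism invariance\<close>

lemma dominating_image_iff:
  assumes bij: "bij_betw f (verts G) (verts G')"
    and adj: "\<forall>x\<in>verts G. \<forall>y\<in>verts G. adj G x y \<longleftrightarrow> adj G' (f x) (f y)"
    and D: "D \<subseteq> verts G"
  shows "dominating G' (f ` D) \<longleftrightarrow> dominating G D"
proof -
  have inj: "inj_on f (verts G)" and img: "f ` verts G = verts G'"
    using bij by (auto simp: bij_betw_def)
  have mem: "f x \<in> f ` D \<longleftrightarrow> x \<in> D" if "x \<in> verts G" for x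
    using inj D that by (auto simp: inj_on_def)
  have pointwise: "(f v \<in> f ` D \<or> (\<exists>u'\<in>f ` D. adj G' (f v) u')) \<longleftrightarrow> (v \<in> D \<or> (\<exists>u\<in>D. adj G v u))"
    if "v \<in> verts G" for v
    using mem[OF that] adj that D by blast
  have "(\<forall>v'\<in>verts G'. v' \<in> f ` D \<or> (\<exists>u'\<in>f ` D. adj G' v' u'))
      \<longleftrightarrow> (\<forall>v\<in>verts G. v \<in> D \<or> (\<exists>u\<in>D. adj G v u))"
    unfolding img[symmetric] using pointwise by simp
  then show ?thesis using D img by (auto simp: dominating_def)
qed

lemma well_dominated_iso:
  assumes iso: "graph_iso G G'" and wd: "well_dominated G'"
  shows "well_dominated G"
proof -
  obtain f where bij: "bij_betw f (verts G) (verts G')"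
    and adj: "\<forall>x\<in>verts G. \<forall>y\<in>verts G. adj G x y \<longleftrightarrow> adj G' (f x) (f y)"
    using iso by (auto simp: graph_iso_def)
  have inj: "inj_on f (verts G)" using bij by (simp add: bij_betw_def)
  note dom_iff = dominating_image_iff[OF bij adj]
  have card_img: "card (f ` D) = card D" if "D \<subseteq> verts G" for D
    using inj that by (metis card_image inj_on_subset)
  show ?thesis
    unfolding well_dominated_def minimum_dominating_def
  proof (intro allI impI conjI)
    fix D assume min: "minimal_dominating G D"
    then show dom: "dominating G D" by (simp add: minimal_dominating_def)
    then have DV: "D \<subseteq> verts G" by (simp add: dominating_def)
    have "minimal_dominating G' (f ` D)"
      unfolding minimal_dominating_def
    proof (intro conjI allI impI notI)
      show "dominating G' (f ` D)" using dom dom_iff[OF DV] by simp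
      fix E' assume sub: "E' \<subset> f ` D" and dom': "dominating G' E'"
      define E where "E = {x \<in> D. f x \<in> E'}"
      have "f ` E = E'" using sub by (auto simp: E_def)
      moreover have "E \<subset> D" using sub \<open>f ` E = E'\<close> by (auto simp: E_def)
      ultimately have "dominating G E" using dom' dom_iff DV by blast
      with \<open>E \<subset> D\<close> min show False by (simp add: minimal_dominating_def)
    qed
    with wd have least: "dominating G' E' \<Longrightarrow> card (f ` D) \<le> card E'" for E'
      by (simp add: well_dominated_def minimum_dominating_def)
    fix D' assume dom': "dominating G D'"
    then have "D' \<subseteq> verts G" by (simp add: dominating_def)
    then show "card D \<le> card D'"
      using least[of "f ` D'"] dom' dom_iff card_img DV by simp
  qed
qed

lemma verts_cart_prod: "verts (cart_prod G H) = verts G \<times> verts H"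
  by (simp add: cart_prod_def verts_def)

lemma graph_iso_cart_prod:
  assumes "graph_iso H K"
  shows "graph_iso (cart_prod G H) (cart_prod G K)"
proof -
  obtain f where bij: "bij_betw f (verts H) (verts K)"
    and adj: "\<And>x y. x \<in> verts H \<Longrightarrow> y \<in> verts H \<Longrightarrow> adj H x y \<longleftrightarrow> adj K (f x) (f y)"
    using assms by (auto simp: graph_iso_def)
  have eq: "f x = f y \<longleftrightarrow> x = y" if "x \<in> verts H" "y \<in> verts H" for x y
    using bij that by (auto simp: bij_betw_def inj_on_def)
  have fV: "f x \<in> verts K" if "x \<in> verts H" for x using bij that by (auto simp: bij_betw_def)
  show ?thesis
    unfolding graph_iso_def
  proof (intro exI conjI)
    show "bij_betw (map_prod id f) (verts (cart_prod G H)) (verts (cart_prod G K))"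
      unfolding verts_cart_prod by (rule bij_betw_map_prod[OF bij_betw_id bij])
    show "\<forall>x\<in>verts (cart_prod G H). \<forall>y\<in>verts (cart_prod G H).
        adj (cart_prod G H) x y \<longleftrightarrow> adj (cart_prod G K) (map_prod id f x) (map_prod id f y)"
      using eq fV adj by (auto simp: cart_prod_def verts_def adj_def)
  qed
qed

section \<open>Products with a complete graph\<close>

definition is_complete :: "'a graph \<Rightarrow> bool" where
  "is_complete G \<longleftrightarrow> (\<forall>x\<in>verts G. \<forall>y\<in>verts G. x \<noteq> y \<longrightarrow> adj G x y)"

lemma verts_complete_graph: "verts (complete_graph m) = {0..<m}"
  by (simp add: complete_graph_def verts_def)

lemma cnbhd_complete_graph: "h < m \<Longrightarrow> cnbhd (complete_graph m) h = {0..<m}"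
  by (auto simp: cnbhd_def nbhd_def complete_graph_def adj_def)

lemma verts_path_graph: "verts (path_graph n) = {0..<n}"
  by (simp add: path_graph_def verts_def)

lemma cnbhd_path_graph:
  "cnbhd (path_graph n) h = {k. k = h \<or> (k < n \<and> h < n \<and> (k = h + 1 \<or> h = k + 1))}"
  by (auto simp: cnbhd_def nbhd_def path_graph_def adj_def)

lemma verts_cart_prod_complete: "verts (cart_prod (complete_graph m) H) = {0..<m} \<times> verts H"
  by (simp add: verts_cart_prod verts_complete_graph)

lemma cnbhd_cart_prod_complete:
  assumes "i < m" "h \<in> verts H"
  shows "cnbhd (cart_prod (complete_graph m) H) (i, h) = {i} \<times> cnbhd H h \<union> {0..<m} \<times> {h}"
  using assms
  by (auto simp: cnbhd_def nbhd_def cart_prod_def complete_graph_def verts_def adj_def)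

lemma card_minimal_dominating_meets_fibers:
  assumes min: "minimal_dominating (cart_prod (complete_graph m) H) D"
    and meets: "\<And>h. h \<in> verts H \<Longrightarrow> \<exists>i. (i, h) \<in> D"
  shows "card D = card (verts H)"
proof -
  have DV: "D \<subseteq> {0..<m} \<times> verts H"
    using min by (simp add: minimal_dominating_def dominating_def verts_cart_prod_complete)
  have "card D = card (snd ` verts (cart_prod (complete_graph m) H))"
  proof (rule card_minimal_dominating_blocks[OF min])
    fix w assume "w \<in> verts (cart_prod (complete_graph m) H)"
    then show "\<exists>u\<in>D. snd u = snd w" using meets by (force simp: verts_cart_prod_complete)
  qed (auto simp: verts_cart_prod_complete cnbhd_cart_prod_complete)
  also have "snd ` verts (cart_prod (complete_graph m) H) = verts H"
    using meets DV by (force simp: verts_cart_prod_complete)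
  finally show ?thesis .
qed

lemma graph_iso_complete_graph:
  assumes simple: "fin_simple_graph H" and complete: "is_complete H"
  shows "graph_iso H (complete_graph (card (verts H)))"
proof -
  have "finite (verts H)" using simple by (simp add: fin_simple_graph_def)
  then obtain f where f: "bij_betw f (verts H) {0..<card (verts H)}"
    using ex_bij_betw_finite_nat by blast
  have irrefl: "\<not> adj H x x" for x using simple by (auto simp: fin_simple_graph_def)
  show ?thesis
    unfolding graph_iso_def
  proof (intro exI[of _ f] conjI ballI)
    show "bij_betw f (verts H) (verts (complete_graph (card (verts H))))"
      using f by (simp add: verts_complete_graph)
    fix x y assume "x \<in> verts H" "y \<in> verts H"
    moreover have "f x = f y \<longleftrightarrow> x = y" using f calculation by (auto simp: bij_betw_def inj_on_def)
    ultimately show "adj H x y \<longleftrightarrow> adj (complete_graph (card (verts H))) (f x) (f y)"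
      using f complete irrefl
      by (auto simp: is_complete_def complete_graph_def adj_def bij_betw_def)
  qed
qed

lemma well_dominated_complete_prod_complete:
  "well_dominated (cart_prod (complete_graph m) (complete_graph m))"
proof (rule well_dominatedI)
  let ?G = "cart_prod (complete_graph m) (complete_graph m)"
  have V: "verts ?G = {0..<m} \<times> {0..<m}"
    by (simp add: verts_cart_prod_complete verts_complete_graph)
  have N: "cnbhd ?G (i, h) = {i} \<times> {0..<m} \<union> {0..<m} \<times> {h}" if "i < m" "h < m" for i h
    using that by (simp add: cnbhd_cart_prod_complete cnbhd_complete_graph verts_complete_graph)
  show "finite (verts ?G)" by (simp add: V)
  fix D assume min: "minimal_dominating ?G D"
  show "card D = m"
  proof (cases "\<forall>h<m. \<exists>i. (i, h) \<in> D")
    case True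
    then show ?thesis
      using card_minimal_dominating_meets_fibers[OF min] by (simp add: verts_complete_graph)
  next
    case False
    then obtain h where h: "h < m" "\<And>i. (i, h) \<notin> D" by blast
    have dom: "dominating ?G D" using min by (simp add: minimal_dominating_def)
    have meets: "\<exists>k. (i, k) \<in> D" if i: "i < m" for i
    proof -
      have "cnbhd ?G (i, h) \<inter> D \<noteq> {}" using dom i h(1) by (simp add: dominating_iff_cnbhd V)
      then show ?thesis using N[OF i h(1)] h(2) by auto
    qed
    have "card D = card (fst ` verts ?G)"
      by (rule card_minimal_dominating_blocks[OF min]) (use meets in \<open>force simp: V N\<close>)+
    then show ?thesis using h(1) by (simp add: V)
  qed
qed

section \<open>The product \<open>K\<^sub>3 \<box> P\<^sub>3\<close>\<close>

abbreviation K3_P3 :: "(nat \<times> nat) graph" where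
  "K3_P3 \<equiv> cart_prod (complete_graph 3) (path_graph 3)"

lemma verts_K3_P3: "verts K3_P3 = {0..<3} \<times> {0..<3}"
  by (simp add: verts_cart_prod_complete verts_path_graph)

lemma mem_cnbhd_K3_P3:
  assumes "i < 3" "h < 3"
  shows "(j, k) \<in> cnbhd K3_P3 (i, h) \<longleftrightarrow> j < 3 \<and> k < 3 \<and> (k = h \<or> j = i \<and> (k = h + 1 \<or> h = k + 1))"
  using assms
  by (auto simp: cnbhd_cart_prod_complete verts_path_graph cnbhd_path_graph)

lemma dominating_K3_P3_meets_cnbhd:
  assumes "dominating K3_P3 D" "i < 3" "h < 3"
  shows "\<exists>j k. (j, k) \<in> D \<and> (j, k) \<in> cnbhd K3_P3 (i, h)"
proof -
  have "cnbhd K3_P3 (i, h) \<inter> D \<noteq> {}" using assms by (simp add: dominating_iff_cnbhd verts_K3_P3)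
  then show ?thesis by fast
qed

lemma minimal_dominating_K3_P3_end_fiber_missed:
  assumes min: "minimal_dominating K3_P3 D" and h: "h = 0 \<or> h = 2" "\<And>i. (i, h) \<notin> D"
  shows "D = {0..<3} \<times> {1}"
proof -
  have dom: "dominating K3_P3 D" using min by (simp add: minimal_dominating_def)
  have h3: "h < 3" using h(1) by auto
  have "(i, 1) \<in> D" if "i < 3" for i
    using dominating_K3_P3_meets_cnbhd[OF dom that h3] that h by (auto simp: mem_cnbhd_K3_P3)
  then have sub: "{0..<3} \<times> {1} \<subseteq> D" by auto
  have "(i, 1) \<in> cnbhd K3_P3 (i, c)" if "i < 3" "c < 3" for i c
    using that by (auto simp: mem_cnbhd_K3_P3)
  then have "dominating K3_P3 ({0..<3} \<times> {1})"
    unfolding dominating_iff_cnbhd verts_K3_P3 by fastforce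
  then show ?thesis using sub min unfolding minimal_dominating_def by blast
qed

text \<open>The private neighbour of \<open>(i, c)\<close> cannot be \<open>(i, 1)\<close>, which also sees the other end
  of the path, so it lies in the fibre of \<open>c\<close>.\<close>

lemma minimal_dominating_K3_P3_end_fiber:
  assumes min: "minimal_dominating K3_P3 D" and both: "(i, 0) \<in> D" "(i, 2) \<in> D"
    and c: "c = 0 \<or> c = 2"
  shows "D \<inter> {0..<3} \<times> {c} \<subseteq> {(i, c)}"
proof -
  have "(i, c) \<in> D" using both c by auto
  then obtain t c' where w: "t < 3" "c' < 3" "cnbhd K3_P3 (t, c') \<inter> D = {(i, c)}"
    using minimal_dominating_private_nbr[OF min] by (force simp: private_nbr_def verts_K3_P3)
  have "(i, c) \<in> cnbhd K3_P3 (t, c')" using w(3) by blast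
  then have "c' = c \<or> (t = i \<and> c' = 1)" using c w(1,2) by (auto simp: mem_cnbhd_K3_P3)
  moreover have "\<not> (t = i \<and> c' = 1)"
  proof
    assume "t = i \<and> c' = 1"
    then have "{(i, 0), (i, 2)} \<subseteq> cnbhd K3_P3 (t, c') \<inter> D"
      using both w(1) by (simp add: mem_cnbhd_K3_P3)
    then have "(i, 0) = (i, c)" "(i, 2) = (i, c)" using w(3) by blast+
    then show False by simp
  qed
  ultimately have "c' = c" by blast
  moreover have "{0..<3} \<times> {c} \<subseteq> cnbhd K3_P3 (t, c)" using w(1) c by (auto simp: mem_cnbhd_K3_P3)
  ultimately show ?thesis using w(3) by blast
qed

lemma card_minimal_dominating_K3_P3_middle_fiber_missed:
  assumes min: "minimal_dominating K3_P3 D" and no1: "\<And>i. (i, 1) \<notin> D"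
  shows "card D = 3"
proof -
  have dom: "dominating K3_P3 D" using min by (simp add: minimal_dominating_def)
  then have DV: "D \<subseteq> {0..<3} \<times> {0..<3}" by (simp add: dominating_def verts_K3_P3)
  have layer: "(i, 0) \<in> D \<or> (i, 2) \<in> D" if "i < 3" for i
    using dominating_K3_P3_meets_cnbhd[OF dom that, of 1] that no1
    by (auto simp: mem_cnbhd_K3_P3 numeral_2_eq_2)
  have "inj_on fst D"
  proof (rule inj_onI, rule ccontr)
    fix v v' assume v: "v \<in> D" and v': "v' \<in> D" and eq: "fst v = fst v'" and ne: "v \<noteq> v'"
    obtain i a b where ab: "v = (i, a)" "v' = (i, b)" using eq by (cases v, cases v') auto
    have "a < 3" "b < 3" "i < 3" using v v' ab DV by auto
    moreover have "a \<noteq> 1" "b \<noteq> 1" "a \<noteq> b" using v v' ab no1 ne by auto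
    ultimately have both: "(i, 0) \<in> D" "(i, 2) \<in> D"
      using v v' ab by (auto simp: less_Suc_eq numeral_3_eq_3 numeral_2_eq_2)
    have "\<exists>k<3. k \<noteq> i" by presburger
    then obtain k where "k < 3" "k \<noteq> i" by blast
    moreover have "(k, c) \<notin> D" if "c = 0 \<or> c = 2" for c
      using minimal_dominating_K3_P3_end_fiber[OF min both that] \<open>k < 3\<close> \<open>k \<noteq> i\<close> by auto
    ultimately show False using layer by blast
  qed
  moreover have "fst ` D = {0..<3}" using DV layer by force
  ultimately show ?thesis by (metis card_atLeastLessThan card_image diff_zero)
qed

lemma well_dominated_K3_P3: "well_dominated K3_P3"
proof (rule well_dominatedI)
  show "finite (verts K3_P3)" by (simp add: verts_K3_P3)
  fix D assume min: "minimal_dominating K3_P3 D"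
  show "card D = 3"
  proof (cases "\<forall>h<3. \<exists>i. (i, h) \<in> D")
    case True
    then show ?thesis
      using card_minimal_dominating_meets_fibers[OF min] by (simp add: verts_path_graph)
  next
    case False
    then obtain h where h: "h < 3" "\<And>i. (i, h) \<notin> D" by blast
    then consider "h = 0 \<or> h = 2" | "h = 1" by linarith
    then show ?thesis
      using minimal_dominating_K3_P3_end_fiber_missed[OF min _ h(2)]
        card_minimal_dominating_K3_P3_middle_fiber_missed[OF min] h(2) by cases auto
  qed
qed

section \<open>Well-dominated products \<open>K\<^sub>m \<box> H\<close>\<close>

definition independent :: "'a graph \<Rightarrow> 'a set \<Rightarrow> bool" where
  "independent G Z \<longleftrightarrow> (\<forall>x\<in>Z. \<forall>y\<in>Z. \<not> adj G x y)"

locale complete_product =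
  fixes m :: nat and H :: "'a graph"
  assumes two_le_m: "2 \<le> m" and simple: "fin_simple_graph H" and connected: "connected_graph H"
    and two_le_card: "2 \<le> card (verts H)"
begin

abbreviation "V \<equiv> verts H"
abbreviation "G \<equiv> cart_prod (complete_graph m) H"
abbreviation "N \<equiv> nbhd H"
abbreviation "NC \<equiv> cnbhd H"

definition non_nbrs :: "'a \<Rightarrow> 'a set" where "non_nbrs b = V - NC b"

text \<open>\<open>x \<in> enclosed_nbrs b\<close> is exactly what makes \<open>(0, x)\<close> a private neighbour of \<open>(0, b)\<close> in
  \<open>fiber_cover b\<close>.\<close>

definition enclosed_nbrs :: "'a \<Rightarrow> 'a set" where "enclosed_nbrs b = {x \<in> N b. N x \<subseteq> NC b}"

definition fiber_cover :: "'a \<Rightarrow> (nat \<times> 'a) set" where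
  "fiber_cover b = {0..<m} \<times> {b} \<union> {0} \<times> non_nbrs b"

definition indep_cover :: "'a \<Rightarrow> 'a set \<Rightarrow> (nat \<times> 'a) set" where
  "indep_cover b Z = {1..<m} \<times> {b} \<union> {0} \<times> (non_nbrs b \<union> Z)"

definition edge_cover :: "'a \<Rightarrow> 'a \<Rightarrow> (nat \<times> 'a) set" where
  "edge_cover a b = {0..<m} \<times> {a, b} \<union> {0} \<times> (non_nbrs a \<inter> non_nbrs b)"

lemma finite_V: "finite V" using simple by (simp add: fin_simple_graph_def)

lemma adjD: "adj H x y \<Longrightarrow> x \<in> V \<and> y \<in> V \<and> x \<noteq> y \<and> adj H y x"
  using simple by (simp add: fin_simple_graph_def)

lemma adj_irrefl: "\<not> adj H x x" using adjD by blast

lemma adj_sym: "adj H x y \<Longrightarrow> adj H y x" using adjD by blast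

lemma mem_nbhd: "y \<in> N x \<longleftrightarrow> adj H x y" by (simp add: nbhd_def)

lemma nbhd_sym: "y \<in> N x \<Longrightarrow> x \<in> N y" using adjD by (auto simp: nbhd_def)

lemma mem_cnbhd: "y \<in> NC x \<longleftrightarrow> y = x \<or> adj H x y" by (auto simp: cnbhd_def nbhd_def)

lemma cnbhd_sym: "y \<in> NC x \<Longrightarrow> x \<in> NC y" using adjD by (auto simp: cnbhd_def nbhd_def)

lemma nbhd_subset: "N x \<subseteq> V" using adjD by (auto simp: nbhd_def)

lemma finite_nbhd: "finite (N x)" using nbhd_subset finite_V by (rule finite_subset)

lemma not_mem_nbhd: "x \<notin> N x" using adjD by (auto simp: nbhd_def)

lemma cnbhd_subset: "x \<in> V \<Longrightarrow> NC x \<subseteq> V" using nbhd_subset by (auto simp: cnbhd_def)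

lemma card_cnbhd: "card (NC x) = Suc (card (N x))"
  using finite_nbhd not_mem_nbhd by (simp add: cnbhd_def)

lemma mem_non_nbrs: "y \<in> non_nbrs b \<longleftrightarrow> y \<in> V \<and> y \<noteq> b \<and> \<not> adj H b y"
  by (auto simp: non_nbrs_def cnbhd_def nbhd_def)

lemma card_non_nbrs:
  assumes "b \<in> V" shows "card (non_nbrs b) + Suc (card (N b)) = card V"
proof -
  have "finite (NC b)" using finite_subset[OF cnbhd_subset[OF assms] finite_V] .
  then have "card (non_nbrs b) = card V - card (NC b)"
    using cnbhd_subset[OF assms] by (simp add: non_nbrs_def card_Diff_subset)
  moreover have "card (NC b) \<le> card V" using card_mono[OF finite_V cnbhd_subset[OF assms]] .
  ultimately show ?thesis using card_cnbhd[of b] by simp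
qed

lemma verts_G: "verts G = {0..<m} \<times> V"
  by (rule verts_cart_prod_complete)

lemma finite_G: "finite (verts G)" using finite_V by (simp add: verts_G)

lemma cnbhd_G: "i < m \<Longrightarrow> h \<in> V \<Longrightarrow> cnbhd G (i, h) = {i} \<times> NC h \<union> {0..<m} \<times> {h}"
  by (rule cnbhd_cart_prod_complete)

lemma dominating_G_iff:
  "dominating G D \<longleftrightarrow> D \<subseteq> {0..<m} \<times> V \<and> (\<forall>i<m. \<forall>h\<in>V. ({i} \<times> NC h \<union> {0..<m} \<times> {h}) \<inter> D \<noteq> {})"
  by (auto simp: dominating_iff_cnbhd verts_G cnbhd_G)

lemma private_nbr_G_iff:
  "private_nbr G D v (i, h) \<longleftrightarrow> i < m \<and> h \<in> V \<and> ({i} \<times> NC h \<union> {0..<m} \<times> {h}) \<inter> D = {v}"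
  by (cases "i < m \<and> h \<in> V") (auto simp: private_nbr_def verts_G cnbhd_G)

lemma connected_closed_subset:
  assumes "b \<in> V" "b \<in> X" "\<And>x y. x \<in> X \<Longrightarrow> adj H x y \<Longrightarrow> y \<in> X"
  shows "V \<subseteq> X"
proof
  fix c assume "c \<in> V"
  then have "(adj H)\<^sup>*\<^sup>* b c" using connected assms(1) by (simp add: connected_graph_def)
  then show "c \<in> X" by induction (use assms(2,3) in blast)+
qed

lemma exists_vertex: "\<exists>x. x \<in> V"
  using two_le_card by (metis all_not_in_conv card.empty not_numeral_le_zero)

lemma nbhd_nonempty:
  assumes "x \<in> V" shows "N x \<noteq> {}"
proof
  assume "N x = {}"
  then have "V \<subseteq> {x}" by (intro connected_closed_subset[OF assms]) (auto simp: nbhd_def)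
  then have "card V \<le> 1" using card_mono[of "{x}"] by fastforce
  then show False using two_le_card by simp
qed

lemma graph_iso_path_graph_3:
  assumes card: "card V = 3" and nc: "\<not> is_complete H"
  shows "graph_iso H (path_graph 3)"
proof -
  obtain x y where xy: "x \<in> V" "y \<in> V" "x \<noteq> y" "\<not> adj H x y"
    using nc by (auto simp: is_complete_def)
  have "card (V - {x, y}) = 1" using card xy finite_V by (simp add: card_Diff_subset)
  then obtain c where c: "V - {x, y} = {c}" by (metis card_1_singletonE)
  then have V: "V = {x, c, y}" and "c \<noteq> x" "c \<noteq> y" using xy by auto
  have "adj H v c" if "v \<in> {x, y}" for v
  proof -
    have "v \<in> V" using that xy by blast
    then obtain u where u: "adj H v u" using nbhd_nonempty by (auto simp: nbhd_def)
    then have "u \<in> {x, c, y}" "u \<noteq> v" using adjD V by blast+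
    moreover have "u \<notin> {x, y}" using u that xy(4) adj_irrefl by (auto dest: adj_sym)
    ultimately show ?thesis using u by blast
  qed
  then have adj_c: "adj H x c" "adj H c x" "adj H y c" "adj H c y" by (auto dest: adj_sym)
  define f where "f v = (if v = x then 0 else if v = c then 1 else 2 :: nat)" for v
  have f: "f x = 0" "f c = 1" "f y = 2" using \<open>c \<noteq> x\<close> \<open>c \<noteq> y\<close> xy(3) by (auto simp: f_def)
  show ?thesis
    unfolding graph_iso_def
  proof (intro exI[of _ f] conjI ballI)
    have "f ` V = {0..<3}" using f V by auto
    moreover have "inj_on f V" using f V \<open>c \<noteq> x\<close> \<open>c \<noteq> y\<close> xy(3) by (auto simp: inj_on_def)
    ultimately show "bij_betw f V (verts (path_graph 3))"
      by (simp add: bij_betw_def verts_path_graph)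
    fix u v assume "u \<in> V" "v \<in> V"
    then show "adj H u v \<longleftrightarrow> adj (path_graph 3) (f u) (f v)"
      using V f adj_c xy(4) adj_sym adj_irrefl by (auto simp: path_graph_def adj_def)
  qed
qed

lemma minimal_dominating_layer: "minimal_dominating G ({0} \<times> V)"
proof (rule minimal_dominatingI)
  have "(0, h) \<in> ({i} \<times> NC h \<union> {0..<m} \<times> {h}) \<inter> ({0} \<times> V)" if "h \<in> V" for i h
    using that two_le_m by simp
  then show "dominating G ({0} \<times> V)" unfolding dominating_G_iff using two_le_m by blast
  fix v :: "nat \<times> 'a" assume "v \<in> {0} \<times> V"
  then obtain h where h: "v = (0, h)" "h \<in> V" by blast
  have "({1} \<times> NC h \<union> {0..<m} \<times> {h}) \<inter> ({0} \<times> V) = {(0, h)}"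
    using h(2) two_le_m by auto
  then have "private_nbr G ({0} \<times> V) v (1, h)"
    using h two_le_m by (simp add: private_nbr_G_iff)
  then show "\<exists>w. private_nbr G ({0} \<times> V) v w" ..
qed

lemma dominating_fiber_cover:
  assumes b: "b \<in> V" shows "dominating G (fiber_cover b)"
  unfolding dominating_G_iff
proof (intro conjI allI impI ballI)
  fix i h assume ih: "i < m" "h \<in> V"
  have "(i, b) \<in> ({i} \<times> NC h \<union> {0..<m} \<times> {h}) \<inter> fiber_cover b" if "h \<in> NC b"
    using that ih cnbhd_sym[of h b] by (simp add: fiber_cover_def)
  moreover have "(0, h) \<in> ({i} \<times> NC h \<union> {0..<m} \<times> {h}) \<inter> fiber_cover b" if "h \<notin> NC b"
    using that ih two_le_m by (simp add: fiber_cover_def non_nbrs_def)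
  ultimately show "({i} \<times> NC h \<union> {0..<m} \<times> {h}) \<inter> fiber_cover b \<noteq> {}" by blast
qed (use b two_le_m in \<open>auto simp: fiber_cover_def non_nbrs_def\<close>)

lemma card_fiber_cover: "card (fiber_cover b) = m + card (non_nbrs b)"
proof -
  have "finite (non_nbrs b)" using finite_V by (simp add: non_nbrs_def)
  moreover have "b \<notin> non_nbrs b" by (simp add: mem_non_nbrs)
  ultimately show ?thesis
    unfolding fiber_cover_def by (subst card_Un_disjoint) (auto simp: card_cartesian_product)
qed

lemma private_nbr_fiber_cover:
  assumes b: "b \<in> V" and a: "a \<in> enclosed_nbrs b" and v: "v \<in> fiber_cover b"
  shows "\<exists>w. private_nbr G (fiber_cover b) v w"
proof -
  obtain x where x: "x \<in> N b" using nbhd_nonempty[OF b] by blast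
  consider (fiber) i where "v = (i, b)" "0 < i" "i < m" | (centre) "v = (0, b)"
    | (far) y where "v = (0, y)" "y \<in> non_nbrs b"
    using v by (auto simp: fiber_cover_def) (metis neq0_conv)
  then show ?thesis
  proof cases
    case fiber
    have "x \<in> V" "x \<noteq> b" "x \<notin> non_nbrs b" "b \<in> NC x"
      using x nbhd_subset not_mem_nbhd nbhd_sym[OF x] by (auto simp: non_nbrs_def cnbhd_def)
    then have "private_nbr G (fiber_cover b) v (i, x)"
      using fiber by (auto simp: private_nbr_G_iff fiber_cover_def)
    then show ?thesis ..
  next
    case centre
    have "a \<in> V" "a \<noteq> b" "a \<notin> non_nbrs b" "b \<in> NC a" "NC a \<inter> non_nbrs b = {}"
      using a nbhd_subset not_mem_nbhd nbhd_sym
      by (auto simp: enclosed_nbrs_def non_nbrs_def cnbhd_def)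
    then have "private_nbr G (fiber_cover b) v (0, a)"
      using centre two_le_m by (auto simp: private_nbr_G_iff fiber_cover_def)
    then show ?thesis ..
  next
    case far
    have "y \<in> V" "y \<noteq> b" "b \<notin> NC y" using far by (auto simp: mem_non_nbrs mem_cnbhd dest: adjD)
    then have "private_nbr G (fiber_cover b) v (1, y)"
      using far two_le_m by (auto simp: private_nbr_G_iff fiber_cover_def)
    then show ?thesis ..
  qed
qed

lemma dominating_indep_cover:
  assumes b: "b \<in> V" and Z: "Z \<subseteq> N b"
    and cover: "\<And>x. x \<in> N b - Z \<Longrightarrow> N x \<inter> (non_nbrs b \<union> Z) \<noteq> {}"
  shows "dominating G (indep_cover b Z)"
  unfolding dominating_G_iff
proof (intro conjI allI impI ballI)
  fix i h assume ih: "i < m" "h \<in> V"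
  let ?C = "{i} \<times> NC h \<union> {0..<m} \<times> {h}"
  have far: "(0, h) \<in> ?C \<inter> indep_cover b Z" if "h \<in> non_nbrs b \<union> Z"
    using that two_le_m by (simp add: indep_cover_def)
  have centre: "(1, b) \<in> ?C \<inter> indep_cover b Z" if "h = b" "i = 0"
    using that two_le_m by (simp add: indep_cover_def)
  have fiber: "(i, b) \<in> ?C \<inter> indep_cover b Z" if "h = b \<or> h \<in> N b" "i \<noteq> 0"
    using that ih nbhd_sym[of h b] by (auto simp: indep_cover_def cnbhd_def)
  have nbr: "?C \<inter> indep_cover b Z \<noteq> {}" if "h \<in> N b - Z" "i = 0"
    using that cover[of h] by (auto simp: indep_cover_def cnbhd_def)
  have "h \<in> non_nbrs b \<union> Z \<or> h = b \<or> h \<in> N b - Z" using ih(2) by (auto simp: non_nbrs_def cnbhd_def)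
  then show "?C \<inter> indep_cover b Z \<noteq> {}" using far centre fiber nbr by (cases "i = 0") blast+
qed (use b Z nbhd_subset two_le_m in \<open>auto simp: indep_cover_def non_nbrs_def\<close>)

lemma private_nbr_indep_cover:
  assumes Z: "Z \<subseteq> enclosed_nbrs b" "independent H Z"
    and x0: "x0 \<in> N b - Z" and v: "v \<in> indep_cover b Z"
  shows "\<exists>w. private_nbr G (indep_cover b Z) v w"
proof -
  have ZN: "Z \<subseteq> N b" using Z(1) by (auto simp: enclosed_nbrs_def)
  consider (fiber) i where "v = (i, b)" "0 < i" "i < m"
    | (far) y where "v = (0, y)" "y \<in> non_nbrs b"
    | (indep) z where "v = (0, z)" "z \<in> Z"
    using v by (auto simp: indep_cover_def)
  then show ?thesis
  proof cases
    case fiber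
    have "x0 \<in> V" "x0 \<noteq> b" "x0 \<notin> non_nbrs b \<union> Z" "b \<in> NC x0"
      using x0 nbhd_subset not_mem_nbhd nbhd_sym by (auto simp: non_nbrs_def cnbhd_def)
    then have "private_nbr G (indep_cover b Z) v (i, x0)"
      using fiber by (auto simp: private_nbr_G_iff indep_cover_def)
    then show ?thesis ..
  next
    case far
    have "y \<in> V" "y \<noteq> b" "b \<notin> NC y" "y \<notin> Z"
      using far ZN by (auto simp: mem_non_nbrs mem_cnbhd mem_nbhd dest: adjD)
    then have "private_nbr G (indep_cover b Z) v (1, y)"
      using far two_le_m by (auto simp: private_nbr_G_iff indep_cover_def)
    then show ?thesis ..
  next
    case indep
    have "z \<in> V" "z \<noteq> b" using indep ZN nbhd_subset not_mem_nbhd by auto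
    moreover have "N z \<inter> non_nbrs b = {}"
      using indep Z(1) by (auto simp: enclosed_nbrs_def non_nbrs_def)
    moreover have "N z \<inter> Z = {}" using indep Z(2) by (auto simp: independent_def nbhd_def)
    ultimately have "private_nbr G (indep_cover b Z) v (0, z)"
      using indep two_le_m by (auto simp: private_nbr_G_iff indep_cover_def cnbhd_def)
    then show ?thesis ..
  qed
qed

lemma card_indep_cover:
  assumes "Z \<subseteq> N b"
  shows "card (indep_cover b Z) + 1 = m + card (non_nbrs b) + card Z"
proof -
  have fin: "finite (non_nbrs b)" "finite Z"
    using finite_V assms finite_nbhd by (auto simp: non_nbrs_def intro: finite_subset)
  have disj: "non_nbrs b \<inter> Z = {}" using assms by (auto simp: non_nbrs_def cnbhd_def)
  have "card (indep_cover b Z) = card ({1..<m} \<times> {b}) + card ({0::nat} \<times> (non_nbrs b \<union> Z))"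
    unfolding indep_cover_def using fin by (intro card_Un_disjoint) auto
  also have "\<dots> = (m - 1) + (card (non_nbrs b) + card Z)"
    using fin disj by (simp add: card_cartesian_product card_Un_disjoint)
  finally show ?thesis using two_le_m by simp
qed

lemma edge_cover_commute: "edge_cover a b = edge_cover b a"
  by (auto simp: edge_cover_def)

lemma dominating_edge_cover:
  assumes "a \<in> V" "b \<in> V"
  shows "dominating G (edge_cover a b)"
  unfolding dominating_G_iff
proof (intro conjI allI impI ballI)
  fix i h assume ih: "i < m" "h \<in> V"
  let ?C = "{i} \<times> NC h \<union> {0..<m} \<times> {h}"
  have "(i, a) \<in> ?C \<inter> edge_cover a b" if "h \<in> NC a"
    using that ih cnbhd_sym by (simp add: edge_cover_def)
  moreover have "(i, b) \<in> ?C \<inter> edge_cover a b" if "h \<in> NC b"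
    using that ih cnbhd_sym by (simp add: edge_cover_def)
  moreover have "(0, h) \<in> ?C \<inter> edge_cover a b" if "h \<notin> NC a" "h \<notin> NC b"
    using that ih two_le_m by (simp add: edge_cover_def non_nbrs_def)
  ultimately show "?C \<inter> edge_cover a b \<noteq> {}" by blast
qed (use assms two_le_m in \<open>auto simp: edge_cover_def non_nbrs_def\<close>)

text \<open>For \<open>i = 0\<close> the witness \<open>(0, x)\<close> also sees the layer-0 copy of the common non-neighbours,
  unless all neighbours of \<open>x\<close> lie in \<open>N[a] \<union> N[b]\<close>.\<close>

lemma private_nbr_edge_cover_fiber:
  assumes x: "x \<in> N a - NC b" and i: "i < m"
    and i0: "i = 0 \<Longrightarrow> N x \<subseteq> NC a \<union> NC b"
  shows "private_nbr G (edge_cover a b) (i, a) (i, x)"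
proof -
  let ?R = "non_nbrs a \<inter> non_nbrs b"
  have x_facts: "x \<in> V" "x \<noteq> a" "x \<noteq> b" "x \<notin> ?R"
    using x nbhd_subset not_mem_nbhd by (auto simp: non_nbrs_def cnbhd_def)
  have "({i} \<times> NC x \<union> {0..<m} \<times> {x}) \<inter> edge_cover a b
      = {i} \<times> (NC x \<inter> {a, b}) \<union> ({i} \<inter> {0}) \<times> (NC x \<inter> ?R)"
    using x_facts i by (auto simp: edge_cover_def)
  also have "NC x \<inter> {a, b} = {a}" using x by (auto simp: cnbhd_def dest: nbhd_sym)
  also have "({i} \<inter> {0}) \<times> (NC x \<inter> ?R) = {}"
    using i0 x by (cases "i = 0") (auto simp: non_nbrs_def cnbhd_def)
  finally show ?thesis using x_facts i by (simp add: private_nbr_G_iff)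
qed

lemma private_nbr_edge_cover_far:
  assumes r: "r \<in> non_nbrs a \<inter> non_nbrs b"
  shows "private_nbr G (edge_cover a b) (0, r) (1, r)"
proof -
  have "r \<in> V" "r \<noteq> a" "r \<noteq> b" "NC r \<inter> {a, b} = {}"
    using r by (auto simp: non_nbrs_def cnbhd_def dest: nbhd_sym)
  then show ?thesis using r two_le_m by (auto simp: private_nbr_G_iff edge_cover_def)
qed

lemma private_nbr_edge_cover:
  assumes x: "x \<in> N a - NC b" and y: "y \<in> N b - NC a"
    and I: "I \<subseteq> {0..<m}" and I0: "0 \<in> I \<Longrightarrow> N x \<subseteq> NC a \<union> NC b"
    and v: "v \<in> I \<times> {a} \<union> {1..<m} \<times> {b} \<union> {0} \<times> (non_nbrs a \<inter> non_nbrs b)"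
  shows "\<exists>w. private_nbr G (edge_cover a b) v w"
proof -
  consider (a) i where "v = (i, a)" "i \<in> I" | (b) i where "v = (i, b)" "0 < i" "i < m"
    | (far) r where "v = (0, r)" "r \<in> non_nbrs a \<inter> non_nbrs b"
    using v by auto
  then show ?thesis
  proof cases
    case a
    have "i < m" "i = 0 \<Longrightarrow> N x \<subseteq> NC a \<union> NC b" using a(2) I I0 by auto
    then have "private_nbr G (edge_cover a b) (i, a) (i, x)"
      by (rule private_nbr_edge_cover_fiber[OF x])
    then show ?thesis using a(1) by blast
  next
    case b
    have "private_nbr G (edge_cover b a) (i, b) (i, y)"
      using b y by (intro private_nbr_edge_cover_fiber) auto
    then show ?thesis using b(1) edge_cover_commute by auto
  next
    case far
    then show ?thesis using private_nbr_edge_cover_far[OF far(2)] by blast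
  qed
qed

lemma card_non_nbrs_Int:
  assumes "adj H a b"
  shows "card (non_nbrs a \<inter> non_nbrs b) + card (N a \<union> N b) = card V"
proof -
  have "non_nbrs a \<inter> non_nbrs b = V - (N a \<union> N b)"
    using adjD[OF assms] assms by (auto simp: non_nbrs_def cnbhd_def mem_nbhd)
  then show ?thesis
    using card_Diff_subset[of "N a \<union> N b" V] card_mono[OF finite_V, of "N a \<union> N b"]
      finite_nbhd nbhd_subset by simp
qed

lemma card_nbhd_less_if_nbhd_subset:
  assumes y: "y \<in> N b" and sub: "N b \<subseteq> NC y" and z: "z \<in> N y - NC b"
  shows "card (N b) < card (N y)"
proof -
  have "insert b (insert z (N b - {y})) \<subseteq> N y"
    using sub z nbhd_sym[OF y] not_mem_nbhd by (auto simp: cnbhd_def)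
  then have "card (insert b (insert z (N b - {y}))) \<le> card (N y)"
    by (simp add: card_mono finite_nbhd)
  moreover have "card (insert b (insert z (N b - {y}))) = Suc (card (N b))"
    using z y not_mem_nbhd finite_nbhd card_gt_0_iff[of "N b"]
    by (auto simp: cnbhd_def card_Diff_singleton)
  ultimately show ?thesis by simp
qed

lemma exists_maximal_independent:
  assumes "Z0 \<subseteq> N b" "independent H Z0"
  obtains Z where "Z0 \<subseteq> Z" "Z \<subseteq> N b" "independent H Z" "\<And>u. u \<in> N b - Z \<Longrightarrow> N u \<inter> Z \<noteq> {}"
proof -
  let ?S = "{Z. Z \<subseteq> N b \<and> independent H Z}"
  have "finite ?S" using finite_nbhd by simp
  moreover have "Z0 \<in> ?S" using assms by simp
  ultimately have "\<exists>Z\<in>?S. Z0 \<subseteq> Z \<and> (\<forall>Z'\<in>?S. Z \<subseteq> Z' \<longrightarrow> Z = Z')"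
    by (rule finite_has_maximal2)
  then obtain Z where Z: "Z0 \<subseteq> Z" "Z \<subseteq> N b" "independent H Z"
    and maximal: "\<forall>Z'\<in>?S. Z \<subseteq> Z' \<longrightarrow> Z = Z'" by blast
  have "N u \<inter> Z \<noteq> {}" if u: "u \<in> N b - Z" for u
  proof
    assume "N u \<inter> Z = {}"
    then have "independent H (insert u Z)"
      using Z(3) adj_irrefl[of u] by (auto simp: independent_def nbhd_def dest: adj_sym)
    moreover have "insert u Z \<subseteq> N b" using u Z(2) by blast
    ultimately have "Z = insert u Z" using maximal by blast
    then show False using u by blast
  qed
  with Z show thesis by (rule that)
qed

lemma universal_if_nbhd_enclosed:
  assumes b: "b \<in> V" and enc: "N b \<subseteq> enclosed_nbrs b"
  shows "V \<subseteq> NC b"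
proof (rule connected_closed_subset[OF b])
  fix u v assume u: "u \<in> NC b" and uv: "adj H u v"
  then have "v \<in> N u" by (simp add: mem_nbhd)
  moreover have "N u \<subseteq> NC b" if "u \<noteq> b" using u that enc by (auto simp: cnbhd_def enclosed_nbrs_def)
  ultimately show "v \<in> NC b" by (cases "u = b") (auto simp: cnbhd_def)
qed (simp add: cnbhd_def)

end

locale well_dominated_complete_product = complete_product +
  assumes wd: "well_dominated G"
begin

lemma card_minimal_dominating: "minimal_dominating G D \<Longrightarrow> card D = card V"
  using well_dominated_card_le[OF wd minimal_dominating_layer]
    well_dominated_card_le[OF wd, of D "{0} \<times> V"] minimal_dominating_layer
  by (fastforce simp: minimal_dominating_def card_cartesian_product)

lemma card_le_dominating: "dominating G D \<Longrightarrow> card V \<le> card D"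
  using well_dominated_card_le[OF wd minimal_dominating_layer] by (simp add: card_cartesian_product)

lemma card_private_nbrs_le:
  assumes "dominating G D0" "F \<subseteq> D0" "\<And>v. v \<in> F \<Longrightarrow> \<exists>w. private_nbr G D0 v w"
  shows "card F \<le> card V"
  using well_dominated_card_private_nbrs_le[OF wd finite_G minimal_dominating_layer assms]
  by (simp add: card_cartesian_product)

lemma card_eq_if_private_nbrs:
  assumes "dominating G D" "\<And>v. v \<in> D \<Longrightarrow> \<exists>w. private_nbr G D v w"
  shows "card D = card V"
  using card_minimal_dominating[OF minimal_dominatingI[OF assms]] .

text \<open>A minimal dominating subset of \<open>{0..<m} \<times> (V - {h0})\<close> meets every layer, since the only
  vertices dominating \<open>(i, h0)\<close> inside it lie in layer \<open>i\<close>.\<close>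

lemma m_le_card: "m \<le> card V"
proof -
  obtain h0 where h0: "h0 \<in> V" using exists_vertex ..
  obtain a where a: "adj H h0 a" using nbhd_nonempty[OF h0] by (auto simp: nbhd_def)
  define D0 where "D0 = {0..<m} \<times> (V - {h0})"
  have "dominating G D0"
    unfolding dominating_G_iff
  proof (intro conjI allI impI ballI)
    fix i h assume "i < m" "h \<in> V"
    then have "(i, if h = h0 then a else h) \<in> ({i} \<times> NC h \<union> {0..<m} \<times> {h}) \<inter> D0"
      using a adjD[OF a] by (auto simp: D0_def mem_cnbhd)
    then show "({i} \<times> NC h \<union> {0..<m} \<times> {h}) \<inter> D0 \<noteq> {}" by blast
  qed (auto simp: D0_def)
  then obtain D where D: "D \<subseteq> D0" "minimal_dominating G D"
    using exists_minimal_dominating_subset[OF finite_G] by blast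
  then have dom: "dominating G D" by (simp add: minimal_dominating_def)
  have "{0..<m} \<subseteq> fst ` D"
  proof
    fix i assume i: "i \<in> {0..<m}"
    then have "({i} \<times> NC h0 \<union> {0..<m} \<times> {h0}) \<inter> D \<noteq> {}" using dom h0 by (simp add: dominating_G_iff)
    then obtain u where "u \<in> D" "u \<in> {i} \<times> NC h0" using D(1) by (auto simp: D0_def)
    then show "i \<in> fst ` D" by force
  qed
  then have "m \<le> card (fst ` D)"
    using finite_dominating[OF finite_G dom]
    by (metis card_atLeastLessThan card_mono diff_zero finite_imageI)
  also have "\<dots> \<le> card D" using finite_dominating[OF finite_G dom] by (rule card_image_le)
  also have "\<dots> = card V" using card_minimal_dominating[OF D(2)] .
  finally show ?thesis .
qed

lemma card_nbhd_less: "b \<in> V \<Longrightarrow> card (N b) < m"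
  using card_le_dominating[OF dominating_fiber_cover] card_fiber_cover card_non_nbrs by fastforce

lemma card_nbhd_if_enclosed:
  assumes b: "b \<in> V" and a: "a \<in> enclosed_nbrs b"
  shows "card (N b) + 1 = m"
proof -
  have "card (fiber_cover b) = card V"
    using card_eq_if_private_nbrs[OF dominating_fiber_cover[OF b]] private_nbr_fiber_cover[OF b a] .
  then show ?thesis using card_fiber_cover card_non_nbrs[OF b] by simp
qed

lemma card_nbhd_independent:
  assumes b: "b \<in> V" and Z: "Z \<subseteq> enclosed_nbrs b" "independent H Z"
    and cover: "\<And>x. x \<in> N b - Z \<Longrightarrow> N x \<inter> (non_nbrs b \<union> Z) \<noteq> {}"
    and x0: "x0 \<in> N b - Z"
  shows "card (N b) + 2 = m + card Z"
proof -
  have ZN: "Z \<subseteq> N b" using Z(1) by (auto simp: enclosed_nbrs_def)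
  have "dominating G (indep_cover b Z)" using b ZN cover by (rule dominating_indep_cover)
  then have "card (indep_cover b Z) = card V"
    using card_eq_if_private_nbrs private_nbr_indep_cover[OF Z x0] by blast
  then show ?thesis using card_indep_cover[OF ZN] card_non_nbrs[OF b] by simp
qed

lemma card_nbhd_if_not_enclosed:
  assumes b: "b \<in> V" and A: "enclosed_nbrs b = {}"
  shows "card (N b) + 2 = m"
proof -
  obtain x0 where "x0 \<in> N b" using nbhd_nonempty[OF b] by blast
  moreover have "N x \<inter> non_nbrs b \<noteq> {}" if "x \<in> N b" for x
    using that A nbhd_subset by (auto simp: enclosed_nbrs_def non_nbrs_def)
  ultimately show ?thesis
    using card_nbhd_independent[OF b, of "{}" x0] by (simp add: independent_def)
qed

text \<open>If \<open>b\<close> is adjacent to everything, extend a non-edge \<open>{x, y}\<close> to a maximal independent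
  set \<open>Z\<close> of neighbours.  Unless \<open>Z\<close> is all of \<open>N b\<close>, \<open>|Z| \<ge> 2\<close> contradicts
  \<open>card_nbhd_independent\<close>; otherwise \<open>H\<close> is a star, whose leaves force \<open>m = 3\<close>.\<close>

lemma universal_vertex_three_vertices:
  assumes b: "b \<in> V" and univ: "V \<subseteq> NC b" and nc: "\<not> is_complete H"
  shows "m = 3 \<and> card V = 3"
proof -
  obtain x y where xy: "x \<in> V" "y \<in> V" "x \<noteq> y" "\<not> adj H x y"
    using nc by (auto simp: is_complete_def)
  have "x \<noteq> b" "y \<noteq> b" using xy univ adjD by (auto simp: mem_cnbhd)
  with xy univ have xyN: "x \<in> N b" "y \<in> N b" by (auto simp: cnbhd_def)
  have "independent H {x, y}" using xy(4) adj_irrefl by (auto simp: independent_def dest: adj_sym)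
  then obtain Z where Z: "{x, y} \<subseteq> Z" "Z \<subseteq> N b" "independent H Z"
    and cover: "\<And>u. u \<in> N b - Z \<Longrightarrow> N u \<inter> Z \<noteq> {}"
    using exists_maximal_independent[of "{x, y}" b] xyN by blast
  have enc: "enclosed_nbrs b = N b" using univ nbhd_subset by (auto simp: enclosed_nbrs_def)
  show ?thesis
  proof (cases "N b \<subseteq> Z")
    case False
    then obtain x0 where "x0 \<in> N b - Z" by blast
    then have "card (N b) + 2 = m + card Z"
      using card_nbhd_independent[OF b _ Z(3)] Z(2) enc cover by blast
    moreover have "2 \<le> card Z"
      using card_mono[OF finite_subset[OF Z(2) finite_nbhd] Z(1)] xy(3) by simp
    ultimately show ?thesis using card_nbhd_less[OF b] by linarith
  next
    case True
    have "N x = {b}"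
    proof
      show "N x \<subseteq> {b}"
      proof
        fix u assume u: "u \<in> N x"
        then have "u \<in> NC b" using univ nbhd_subset by blast
        then show "u \<in> {b}" using u True Z xyN by (auto simp: cnbhd_def independent_def nbhd_def)
      qed
      show "{b} \<subseteq> N x" using nbhd_sym[OF xyN(1)] by blast
    qed
    moreover have "\<not> N b \<subseteq> NC x" using xyN xy by (auto simp: mem_cnbhd dest: adjD)
    ultimately have "enclosed_nbrs x = {}" by (auto simp: enclosed_nbrs_def)
    then have m3: "m = 3" using card_nbhd_if_not_enclosed[OF xy(1)] \<open>N x = {b}\<close> by simp
    have "V = NC b" using univ cnbhd_subset[OF b] by blast
    then have "card V = Suc (card (N b))" using card_cnbhd by simp
    moreover have "card {b, x, y} \<le> card V" using b xy finite_V by (intro card_mono) auto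
    ultimately show ?thesis using m3 card_nbhd_less[OF b] \<open>x \<noteq> b\<close> \<open>y \<noteq> b\<close> xy(3) by simp
  qed
qed

lemma card_nbhd_union_edge:
  assumes ab: "adj H a b" and x: "x \<in> N a - NC b" and y: "y \<in> N b - NC a"
    and I: "I \<subseteq> {0..<m}" and I0: "0 \<in> I \<Longrightarrow> N x \<subseteq> NC a \<union> NC b"
  shows "card I + (m - 1) \<le> card (N a \<union> N b)"
proof -
  let ?R = "non_nbrs a \<inter> non_nbrs b"
  define F where "F = I \<times> {a} \<union> {1..<m} \<times> {b} \<union> {0} \<times> ?R"
  have abV: "a \<in> V" "b \<in> V" "a \<noteq> b" using adjD[OF ab] by auto
  have "F \<subseteq> edge_cover a b" using I by (auto simp: F_def edge_cover_def)
  moreover have "\<exists>w. private_nbr G (edge_cover a b) v w" if "v \<in> F" for v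
    using private_nbr_edge_cover[OF x y I I0] that by (simp add: F_def)
  ultimately have "card F \<le> card V"
    using card_private_nbrs_le[OF dominating_edge_cover[OF abV(1,2)]] by blast
  moreover have "card F = card I + (m - 1) + card ?R"
  proof -
    have fin: "finite ?R" "finite I"
      using finite_V I by (auto simp: non_nbrs_def intro: finite_subset)
    have "card (I \<times> {a} \<union> {1..<m} \<times> {b}) = card I + (m - 1)"
      using fin abV(3) by (subst card_Un_disjoint) (auto simp: card_cartesian_product)
    moreover have "(I \<times> {a} \<union> {1..<m} \<times> {b}) \<inter> {0} \<times> ?R = {}" by (auto simp: non_nbrs_def cnbhd_def)
    ultimately show ?thesis
      unfolding F_def using fin by (subst card_Un_disjoint) (auto simp: card_cartesian_product)
  qed
  ultimately show ?thesis using card_non_nbrs_Int[OF ab] by linarith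
qed

lemma exists_enclosed_nbr: "\<exists>b\<in>V. enclosed_nbrs b \<noteq> {}"
proof (rule ccontr)
  assume "\<not> ?thesis"
  then have none: "enclosed_nbrs b = {}" if "b \<in> V" for b using that by blast
  obtain b where b: "b \<in> V" using exists_vertex ..
  obtain y where y: "y \<in> N b" using nbhd_nonempty[OF b] by blast
  have yV: "y \<in> V" "b \<in> N y" using y nbhd_subset nbhd_sym by auto
  obtain z where "z \<in> N y - NC b" using y none[OF b] by (auto simp: enclosed_nbrs_def)
  moreover obtain x where "x \<in> N b - NC y" using yV none[OF yV(1)] by (auto simp: enclosed_nbrs_def)
  ultimately have "card {1..<m} + (m - 1) \<le> card (N b \<union> N y)"
    using card_nbhd_union_edge[of b y x z "{1..<m}"] y by (auto simp: mem_nbhd)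
  moreover have "card (N b \<union> N y) \<le> card (N b) + card (N y)" by (rule card_Un_le)
  ultimately show False
    using card_nbhd_if_not_enclosed[OF b none[OF b]]
      card_nbhd_if_not_enclosed[OF yV(1) none[OF yV(1)]] by simp
qed

text \<open>Some \<open>b\<close> has an enclosed neighbour \<open>a\<close>, so \<open>deg b = m - 1\<close>; as \<open>b\<close> is not universal,
  it also has a neighbour \<open>y\<close> with a neighbour \<open>z \<notin> N[b]\<close>.  Each way \<open>a\<close> and \<open>N b\<close> can sit
  relative to \<open>y\<close> makes \<open>|N(b) \<union> N(y)|\<close> or \<open>deg y\<close> too large.\<close>

lemma complete_or_three_vertices: "is_complete H \<or> m = 3 \<and> card V = 3"
proof (rule ccontr)
  assume "\<not> ?thesis"
  then have no_universal: "\<not> V \<subseteq> NC b" if "b \<in> V" for b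
    using universal_vertex_three_vertices that by blast
  obtain b a where b: "b \<in> V" and a: "a \<in> enclosed_nbrs b" using exists_enclosed_nbr by blast
  have deg_b: "card (N b) + 1 = m" using card_nbhd_if_enclosed[OF b a] .
  have "\<not> N b \<subseteq> enclosed_nbrs b" using universal_if_nbhd_enclosed[OF b] no_universal[OF b] by blast
  then obtain y where y: "y \<in> N b" "y \<notin> enclosed_nbrs b" by blast
  then obtain z where z: "z \<in> N y - NC b" by (auto simp: enclosed_nbrs_def)
  have yV: "y \<in> V" "adj H b y" using y(1) nbhd_subset by (auto simp: mem_nbhd dest: adjD)
  have deg_y: "card (N y) < m" using card_nbhd_less[OF yV(1)] .
  have aN: "a \<in> N b" "N a \<subseteq> NC b" "a \<noteq> y" using a y by (auto simp: enclosed_nbrs_def)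
  have union: "card (N b \<union> N y) + card (N b \<inter> N y) = card (N b) + card (N y)"
    using card_Un_Int[OF finite_nbhd finite_nbhd] by simp
  consider (a_far) "\<not> adj H a y" | (x_far) x where "adj H a y" "x \<in> N b - NC y"
    | (close) "N b \<subseteq> NC y"
    by blast
  then show False
  proof cases
    case a_far
    then have "a \<in> N b - NC y" using aN by (auto simp: mem_cnbhd dest: adj_sym)
    then have "card {0..<m} + (m - 1) \<le> card (N b \<union> N y)"
      using card_nbhd_union_edge[OF yV(2) _ z, of a "{0..<m}"] aN(2) by blast
    then show ?thesis using union deg_b deg_y by simp
  next
    case x_far
    then have "card {1..<m} + (m - 1) \<le> card (N b \<union> N y)"
      using card_nbhd_union_edge[OF yV(2) _ z, of x "{1..<m}"] by auto
    moreover have "a \<in> N b \<inter> N y" using x_far aN by (auto simp: mem_nbhd dest: adj_sym)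
    then have "card (N b \<inter> N y) \<noteq> 0" using finite_nbhd by auto
    ultimately show ?thesis using union deg_b deg_y by simp
  next
    case close
    then show ?thesis using card_nbhd_less_if_nbhd_subset[OF y(1) _ z] deg_b deg_y by simp
  qed
qed

lemma complete_card_eq_m_or_three_vertices:
  "is_complete H \<and> card V = m \<or> \<not> is_complete H \<and> m = 3 \<and> card V = 3"
proof (cases "is_complete H")
  case True
  obtain x where x: "x \<in> V" using exists_vertex ..
  have "N x = V - {x}"
  proof
    show "N x \<subseteq> V - {x}" using nbhd_subset not_mem_nbhd by blast
    show "V - {x} \<subseteq> N x" using True x by (fastforce simp: is_complete_def mem_nbhd)
  qed
  then have "card V - 1 < m" using card_nbhd_less[OF x] x finite_V by simp
  then show ?thesis using True m_le_card by simp
next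
  case False
  then show ?thesis using complete_or_three_vertices by simp
qed

end

theorem theorem3:
  fixes m :: nat and H :: "'a graph"
  assumes "m \<ge> 2"
    and "fin_simple_graph H" and "connected_graph H" and "card (verts H) \<ge> 2"
  shows "well_dominated (cart_prod (complete_graph m) H) \<longleftrightarrow>
    ((m \<noteq> 3 \<and> graph_iso H (complete_graph m)) \<or>
     (m = 3 \<and> (graph_iso H (complete_graph 3) \<or> graph_iso H (path_graph 3))))"
proof
  interpret complete_product m H using assms by unfold_locales
  assume "well_dominated (cart_prod (complete_graph m) H)"
  then interpret well_dominated_complete_product m H by unfold_locales
  show "(m \<noteq> 3 \<and> graph_iso H (complete_graph m)) \<or>
     (m = 3 \<and> (graph_iso H (complete_graph 3) \<or> graph_iso H (path_graph 3)))"
    using complete_card_eq_m_or_three_vertices graph_iso_complete_graph[OF simple]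
      graph_iso_path_graph_3 by auto
next
  assume "(m \<noteq> 3 \<and> graph_iso H (complete_graph m)) \<or>
     (m = 3 \<and> (graph_iso H (complete_graph 3) \<or> graph_iso H (path_graph 3)))"
  then have "graph_iso H (complete_graph m) \<or> m = 3 \<and> graph_iso H (path_graph 3)" by auto
  then show "well_dominated (cart_prod (complete_graph m) H)"
    using well_dominated_iso[OF graph_iso_cart_prod] well_dominated_complete_prod_complete
      well_dominated_K3_P3 by blast
qed

end
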